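(* Let $0<a\le1\le b<\infty$, $\varphi(s)=\max\{s^a,s^b\}$ for $s>0$, let $c,d>0$ with $cd\le1$, and $g(x)=xF(c,d;c+d;x)$ for $x\in(0,1)$. Then for every $s>0$, $$g\!\left(\frac{\varphi(s)}{1+\varphi(s)}\right)\le\frac ba\max\left\{g^a\!\left(\frac{s}{1+s}\right),\ g\!\left(\frac{s}{1+s}\right)\right\}.$$
   Context: $F(a,b;c;x)$ is the Gaussian hypergeometric function $\sum_{n\ge0}\frac{(a)_n(b)_n}{(c)_n}\frac{x^n}{n!}$ ($|x|<1$), with $(a)_n=a(a+1)\cdots(a+n-1)$, $(a)_0=1$. Here $g^a(y)$ means $(g(y))^a$, and the exponents $a,b$ are distinct from the hypergeometric parameters $c,d$. *)

theory Defs
  imports "HOL-Analysis.Analysis"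
begin

definition hyp2F1 :: "real \<Rightarrow> real \<Rightarrow> real \<Rightarrow> real \<Rightarrow> real" where
  "hyp2F1 a b c x = (\<Sum>n. pochhammer a n * pochhammer b n / (pochhammer c n * fact n) * x ^ n)"

end

theory Submission
  imports Defs
begin

text \<open>Write \<open>g(x) = x F(x)\<close> with \<open>F(x) = \<Sum> a\<^sub>n x\<^sup>n\<close>, \<open>a\<^sub>n\<close> the coefficients of
  \<open>F(c,d;c+d;x)\<close>.  The whole argument only uses that \<open>a\<^sub>n > 0\<close>, \<open>a\<^sub>0 = 1\<close> and that the
  weights \<open>w\<^sub>n = (n+1) a\<^sub>n\<close> decrease; the last property is where \<open>cd \<le> 1\<close> enters.

  \<^item> for \<open>0 < s \<le> 1\<close> and \<open>0 < p \<le> 1\<close>: \<open>g(s\<^sup>p/(1+s\<^sup>p)) \<le> g(s/(1+s))\<^sup>p\<close>, because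
    \<open>(1-x) F(x) = \<Sum> (a\<^sub>n - a_(n-1)) x\<^sup>n\<close> is decreasing and bounded by \<open>a\<^sub>0 = 1\<close>;
  \<^item> for \<open>s \<ge> 1\<close> and \<open>b \<ge> 1\<close>: \<open>g(s\<^sup>b/(1+s\<^sup>b)) \<le> b g(s/(1+s))\<close>.  With \<open>s = e\<^sup>\<tau>\<close>,
    \<open>H(\<tau>) = g(logistic \<tau>)\<close> satisfies \<open>\<tau> H'(\<tau>) \<le> H(\<tau>)\<close>, so \<open>H(\<tau>)/\<tau>\<close> decreases.
    The derivative bound is a Chebyshev-type summation: \<open>w\<^sub>n\<close> decreases while the
    comparison terms \<open>x^(n+1) (1/(n+1) - \<theta>)\<close> change sign once, and their total is
    nonnegative by the binary entropy inequality.\<close>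

lemma summable_bounded_coeffs:
  fixes f :: "nat \<Rightarrow> real"
  assumes "\<And>n. \<bar>f n\<bar> \<le> 1" and "\<bar>x\<bar> < 1"
  shows "summable (\<lambda>n. f n * x ^ n)"
proof (rule summable_comparison_test')
  show "summable (\<lambda>n. \<bar>x\<bar> ^ n)"
    using assms(2) by (simp add: summable_geometric)
  show "norm (f n * x ^ n) \<le> \<bar>x\<bar> ^ n" for n
    using assms(1)[of n] by (simp add: abs_mult power_abs mult_left_le_one_le)
qed

lemma single_sign_change_sum_le:
  fixes w d :: "nat \<Rightarrow> real"
  assumes "decseq w" and "d sums D" and "(\<lambda>n. w n * d n) sums S"
    and "\<And>n. n < N \<Longrightarrow> 0 \<le> d n" and "\<And>n. N \<le> n \<Longrightarrow> d n \<le> 0"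
  shows "w N * D \<le> S"
proof (rule sums_le[OF _ sums_mult[OF assms(2)] assms(3)])
  show "w N * d n \<le> w n * d n" for n
  proof (cases "n < N")
    case True
    then show ?thesis
      using assms(4)[OF True] decseqD[OF assms(1), of n N] by (simp add: mult_right_mono)
  next
    case False
    then show ?thesis
      using assms(5)[of n] decseqD[OF assms(1), of N n] by (simp add: mult_right_mono_neg)
  qed
qed

lemma neg_ln_one_minus_sums:
  fixes x :: real
  assumes "\<bar>x\<bar> < 1"
  shows "(\<lambda>n. x ^ Suc n / real (Suc n)) sums (- ln (1 - x))"
proof -
  have "(\<lambda>n. - (x ^ n / real n)) sums ln (1 - x)"
    using ln_series'[of "-x"] assms by simp
  then have "(\<lambda>n. x ^ n / real n) sums (- ln (1 - x))"
    using sums_minus by fastforce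
  then show ?thesis
    by (subst sums_Suc_iff) simp
qed

text \<open>Nonnegativity of the binary entropy \<open>-x ln x - (1-x) ln (1-x)\<close>, written in terms of
  the log-odds \<open>ln x - ln(1-x)\<close>.\<close>

lemma log_odds_bound:
  fixes x :: real
  assumes "0 < x" and "x < 1"
  shows "x * (ln x - ln (1 - x)) \<le> - ln (1 - x)"
proof -
  have "x * ln x \<le> 0" and "(1 - x) * ln (1 - x) \<le> 0"
    using assms by (auto intro: mult_nonneg_nonpos)
  then show ?thesis
    by (simp add: algebra_simps)
qed

text \<open>The logistic function maps \<open>\<tau> = ln s\<close> to \<open>s/(1+s)\<close>; it is the change of
  variables turning the statement for \<open>s \<ge> 1\<close> into a homogeneity estimate in \<open>\<tau>\<close>.\<close>

definition logistic :: "real \<Rightarrow> real" where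
  "logistic \<tau> = exp \<tau> / (1 + exp \<tau>)"

lemma logistic_pos: "0 < logistic \<tau>"
  unfolding logistic_def by (simp add: add_pos_pos)

lemma logistic_less_1: "logistic \<tau> < 1"
  unfolding logistic_def by (simp add: add_pos_pos)

lemma one_minus_logistic: "1 - logistic \<tau> = 1 / (1 + exp \<tau>)"
proof -
  have "0 < 1 + exp \<tau>" by (simp add: add_pos_pos)
  then show ?thesis unfolding logistic_def by (simp add: field_simps)
qed

lemma logistic_ln: "0 < s \<Longrightarrow> logistic (ln s) = s / (1 + s)"
  unfolding logistic_def by simp

lemma log_odds_logistic: "ln (logistic \<tau>) - ln (1 - logistic \<tau>) = \<tau>"
proof -
  have "0 < 1 + exp \<tau>" by (simp add: add_pos_pos)
  then show ?thesis
    unfolding one_minus_logistic unfolding logistic_def by (simp add: ln_div)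
qed

lemma logistic_deriv:
  "(logistic has_real_derivative logistic \<tau> * (1 - logistic \<tau>)) (at \<tau>)"
proof -
  have "0 < 1 + exp \<tau>" by (simp add: add_pos_pos)
  then have "(logistic has_real_derivative
      (exp \<tau> * (1 + exp \<tau>) - exp \<tau> * exp \<tau>) / ((1 + exp \<tau>) * (1 + exp \<tau>))) (at \<tau>)"
    unfolding logistic_def[abs_def] by (auto intro!: derivative_eq_intros)
  moreover have "(exp \<tau> * (1 + exp \<tau>) - exp \<tau> * exp \<tau>) / ((1 + exp \<tau>) * (1 + exp \<tau>))
      = logistic \<tau> * (1 - logistic \<tau>)"
    unfolding one_minus_logistic unfolding logistic_def by (simp add: field_simps)
  ultimately show ?thesis by simp
qed

locale decreasing_weights =
  fixes a :: "nat \<Rightarrow> real"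
  assumes coeff_pos: "0 < a n"
    and coeff_0: "a 0 = 1"
    and weight_decseq: "decseq (\<lambda>n. real (Suc n) * a n)"
begin

definition weight :: "nat \<Rightarrow> real" where
  "weight n = real (Suc n) * a n"

definition shifted :: "nat \<Rightarrow> real" where
  "shifted n = (case n of 0 \<Rightarrow> 0 | Suc m \<Rightarrow> a m)"

definition F :: "real \<Rightarrow> real" where
  "F x = (\<Sum>n. a n * x ^ n)"

definition G :: "real \<Rightarrow> real" where
  "G x = x * F x"

definition W :: "real \<Rightarrow> real" where
  "W x = (\<Sum>n. weight n * x ^ n)"

text \<open>All weights, hence all coefficients, are bounded by \<open>a\<^sub>0 = 1\<close>, which gives
  convergence of \<open>F\<close>, \<open>G\<close> and \<open>W\<close> on the unit disc.\<close>

lemma weight_le_1: "weight n \<le> 1"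
  using decseqD[OF weight_decseq, of 0 n] by (simp add: weight_def coeff_0)

lemma weight_pos: "0 < weight n"
  using coeff_pos[of n] by (simp add: weight_def)

lemma coeff_le_1: "a n \<le> 1"
proof -
  have "a n \<le> weight n"
    using coeff_pos[of n] by (simp add: weight_def)
  then show ?thesis using weight_le_1[of n] by simp
qed

lemma coeff_antitone: "a (Suc n) \<le> a n"
proof -
  have "real (Suc n) * a (Suc n) \<le> weight (Suc n)"
    using coeff_pos[of "Suc n"] by (simp add: weight_def)
  also have "\<dots> \<le> weight n"
    using decseqD[OF weight_decseq, of n "Suc n"] by (simp add: weight_def)
  finally show ?thesis by (simp add: weight_def)
qed

lemma shifted_bounded: "\<bar>shifted n\<bar> \<le> 1"
  using coeff_le_1 coeff_pos by (auto simp: shifted_def less_imp_le split: nat.split)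

lemma F_sums: "\<bar>x\<bar> < 1 \<Longrightarrow> (\<lambda>n. a n * x ^ n) sums F x"
  unfolding F_def
  by (intro summable_sums summable_bounded_coeffs) (use coeff_le_1 coeff_pos in \<open>auto simp: less_imp_le\<close>)

lemma W_sums: "\<bar>x\<bar> < 1 \<Longrightarrow> (\<lambda>n. weight n * x ^ n) sums W x"
  unfolding W_def
  by (intro summable_sums summable_bounded_coeffs) (use weight_le_1 weight_pos in \<open>auto simp: less_imp_le\<close>)

lemma G_sums:
  assumes "\<bar>x\<bar> < 1"
  shows "(\<lambda>n. shifted n * x ^ n) sums G x"
proof -
  have "(\<lambda>n. x * (a n * x ^ n)) sums G x"
    unfolding G_def by (rule sums_mult[OF F_sums[OF assms]])
  then have "(\<lambda>n. shifted (Suc n) * x ^ Suc n) sums G x"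
    by (simp add: shifted_def algebra_simps)
  then show ?thesis
    by (subst (asm) sums_Suc_iff) (simp add: shifted_def)
qed

lemma F_ge_1:
  assumes "0 \<le> x" and "x < 1"
  shows "1 \<le> F x"
proof -
  have "sum (\<lambda>n. a n * x ^ n) {0} \<le> F x"
    unfolding F_def using assms coeff_pos
    by (intro sum_le_suminf sums_summable[OF F_sums]) (auto simp: less_imp_le)
  then show ?thesis by (simp add: coeff_0)
qed

lemma G_nonneg: "0 \<le> x \<Longrightarrow> x < 1 \<Longrightarrow> 0 \<le> G x"
  using F_ge_1[of x] by (simp add: G_def)

lemma G_deriv:
  assumes "\<bar>x\<bar> < 1"
  shows "(G has_real_derivative W x) (at x)"
proof -
  define K where "K = (1 + \<bar>x\<bar>) / 2"
  have "summable (\<lambda>n. shifted n * K ^ n)"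
    using assms shifted_bounded unfolding K_def by (intro summable_bounded_coeffs) auto
  moreover have "norm x < norm K"
    using assms unfolding K_def by auto
  ultimately have "((\<lambda>y. \<Sum>n. shifted n * y ^ n) has_real_derivative (\<Sum>n. diffs shifted n * x ^ n)) (at x)"
    by (rule termdiffs_strong)
  moreover have "diffs shifted = weight"
    by (simp add: fun_eq_iff diffs_def shifted_def weight_def)
  ultimately have "((\<lambda>y. \<Sum>n. shifted n * y ^ n) has_real_derivative W x) (at x)"
    by (simp add: W_def)
  then show ?thesis
    by (rule has_field_derivative_transform_within_open[where S = "ball 0 1"])
       (use assms G_sums in \<open>auto simp: sums_iff\<close>)
qed


text \<open>\<open>(1-x) F(x) = \<Sum> (a\<^sub>n - a_(n-1)) x\<^sup>n\<close> has a positive constant term and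
  nonpositive higher coefficients, so it decreases on \<open>[0,1)\<close>.\<close>

lemma damped_F_antitone:
  assumes "0 \<le> x" and "x \<le> y" and "y < 1"
  shows "(1 - y) * F y \<le> (1 - x) * F x"
proof -
  have damped_sums: "(\<lambda>n. (a n - shifted n) * z ^ n) sums ((1 - z) * F z)" if "\<bar>z\<bar> < 1" for z
    using sums_diff[OF F_sums[OF that] G_sums[OF that]] by (simp add: G_def algebra_simps)
  show ?thesis
  proof (rule sums_le[OF _ damped_sums damped_sums])
    show "(a n - shifted n) * y ^ n \<le> (a n - shifted n) * x ^ n" for n
    proof (cases n)
      case (Suc m)
      have "a n - shifted n \<le> 0"
        using coeff_antitone[of m] by (simp add: Suc shifted_def)
      moreover have "x ^ n \<le> y ^ n"
        using assms by (intro power_mono) auto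
      ultimately show ?thesis by (simp add: mult_left_mono_neg)
    qed simp
  qed (use assms in auto)
qed

text \<open>Writing \<open>G(x) = \<Sum> w\<^sub>n x^(n+1)/(n+1)\<close>, the
  difference is \<open>\<Sum> w\<^sub>n d\<^sub>n\<close> with \<open>d\<^sub>n = x^(n+1) (1/(n+1) - \<theta>)\<close>, which changes sign at
  \<open>N = \<lfloor>1/\<theta>\<rfloor>\<close> and sums to \<open>-ln(1-x) - \<theta>x/(1-x) \<ge> 0\<close>.\<close>

lemma weighted_derivative_bound:
  assumes "0 < x" and "x < 1" and "0 < \<theta>"
    and "\<theta> * x / (1 - x) \<le> - ln (1 - x)"
  shows "\<theta> * x * W x \<le> G x"
proof -
  have x_abs: "\<bar>x\<bar> < 1" using assms by simp
  define d where "d n = x ^ Suc n * (1 / real (Suc n) - \<theta>)" for n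
  have "(\<lambda>n. x ^ Suc n / real (Suc n) - \<theta> * (x * x ^ n)) sums (- ln (1 - x) - \<theta> * (x * (1 / (1 - x))))"
    using x_abs by (intro sums_diff neg_ln_one_minus_sums sums_mult geometric_sums) auto
  moreover have "(\<lambda>n. x ^ Suc n / real (Suc n) - \<theta> * (x * x ^ n)) = d"
    by (simp add: fun_eq_iff d_def field_simps del: of_nat_Suc)
  ultimately have d_sums: "d sums (- ln (1 - x) - \<theta> * x / (1 - x))"
    by simp
  have "(\<lambda>n. x * (a n * x ^ n) - \<theta> * x * (weight n * x ^ n)) sums (G x - \<theta> * x * W x)"
    unfolding G_def using x_abs by (intro sums_diff sums_mult F_sums W_sums)
  moreover have "(\<lambda>n. x * (a n * x ^ n) - \<theta> * x * (weight n * x ^ n)) = (\<lambda>n. weight n * d n)"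
    by (simp add: fun_eq_iff d_def weight_def field_simps del: of_nat_Suc)
  ultimately have weighted_d_sums: "(\<lambda>n. weight n * d n) sums (G x - \<theta> * x * W x)"
    by simp
  define N where "N = nat \<lfloor>1 / \<theta>\<rfloor>"
  have "weight N * (- ln (1 - x) - \<theta> * x / (1 - x)) \<le> G x - \<theta> * x * W x"
  proof (rule single_sign_change_sum_le[OF _ d_sums weighted_d_sums])
    show "decseq weight"
      using weight_decseq by (simp add: weight_def[abs_def])
    show "0 \<le> d n" if "n < N" for n
    proof -
      have "real (Suc n) \<le> 1 / \<theta>"
        using that assms(3) unfolding N_def by linarith
      then have "\<theta> \<le> 1 / real (Suc n)"
        using assms(3) by (simp add: field_simps del: of_nat_Suc)
      then show ?thesis using assms(1) by (simp add: d_def)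
    qed
    show "d n \<le> 0" if "N \<le> n" for n
    proof -
      have "1 / \<theta> < real (Suc n)"
        using that assms(3) unfolding N_def by linarith
      then have "1 / real (Suc n) < \<theta>"
        using assms(3) by (simp add: field_simps del: of_nat_Suc)
      then show ?thesis using assms(1) by (simp add: d_def mult_nonneg_nonpos)
    qed
  qed
  moreover have "0 \<le> weight N * (- ln (1 - x) - \<theta> * x / (1 - x))"
    using weight_pos[of N] assms(4) by simp
  ultimately show ?thesis by linarith
qed

definition H :: "real \<Rightarrow> real" where
  "H \<tau> = G (logistic \<tau>)"

lemma H_deriv:
  "(H has_real_derivative W (logistic \<tau>) * (logistic \<tau> * (1 - logistic \<tau>))) (at \<tau>)"
  unfolding H_def[abs_def]
  using logistic_pos[of \<tau>] logistic_less_1[of \<tau>]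
  by (intro DERIV_chain2[OF G_deriv logistic_deriv]) simp

text \<open>The elasticity of \<open>H\<close> is at most 1: with \<open>x = logistic \<tau>\<close> and
  \<open>\<theta> = \<tau>(1-x)\<close>, the hypothesis of the key estimate is the entropy inequality.\<close>

lemma H_elasticity_le_1:
  assumes "0 < \<tau>"
  shows "\<tau> * (W (logistic \<tau>) * (logistic \<tau> * (1 - logistic \<tau>))) \<le> H \<tau>"
proof -
  define x where "x = logistic \<tau>"
  have x: "0 < x" "x < 1"
    unfolding x_def by (rule logistic_pos logistic_less_1)+
  have "\<tau> * (1 - x) * x / (1 - x) \<le> - ln (1 - x)"
    using log_odds_bound[OF x] x log_odds_logistic[of \<tau>] unfolding x_def by (simp add: mult.commute)
  then have "\<tau> * (1 - x) * x * W x \<le> G x"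
    using assms x by (intro weighted_derivative_bound) auto
  then show ?thesis
    unfolding H_def x_def[symmetric] by (simp add: algebra_simps)
qed

text \<open>Since \<open>(H(\<tau>)/\<tau>)' = (\<tau> H'(\<tau>) - H(\<tau>))/\<tau>\<^sup>2 \<le> 0\<close>, the quotient \<open>H(\<tau>)/\<tau>\<close>
  decreases on \<open>(0,\<infinity>)\<close>, whence \<open>H(b t) \<le> b H(t)\<close> for \<open>b \<ge> 1\<close>.\<close>

lemma H_subhomogeneous:
  assumes "0 \<le> t" and "1 \<le> b"
  shows "H (b * t) \<le> b * H t"
proof (cases "t = 0")
  case True
  have "0 \<le> H 0"
    unfolding H_def using logistic_pos[of 0] logistic_less_1[of 0] by (intro G_nonneg) auto
  then show ?thesis using True assms(2) by (simp add: mult_le_cancel_right1)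
next
  case False
  then have t: "0 < t" using assms(1) by simp
  have "H (b * t) / (b * t) \<le> H t / t"
  proof (rule DERIV_nonpos_imp_nonincreasing[where f = "\<lambda>\<tau>. H \<tau> / \<tau>"])
    show "t \<le> b * t" using assms t by simp
    fix \<tau> assume "t \<le> \<tau>" "\<tau> \<le> b * t"
    then have \<tau>: "0 < \<tau>" using t by simp
    define D where "D = W (logistic \<tau>) * (logistic \<tau> * (1 - logistic \<tau>))"
    have "((\<lambda>\<tau>. H \<tau> / \<tau>) has_real_derivative (D * \<tau> - H \<tau> * 1) / (\<tau> * \<tau>)) (at \<tau>)"
      using \<tau> H_deriv[of \<tau>] unfolding D_def[symmetric] by (intro DERIV_divide DERIV_ident) auto
    moreover have "(D * \<tau> - H \<tau> * 1) / (\<tau> * \<tau>) \<le> 0"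
      using H_elasticity_le_1[OF \<tau>] unfolding D_def by (intro divide_nonpos_nonneg) (auto simp: algebra_simps)
    ultimately show "\<exists>y. ((\<lambda>\<tau>. H \<tau> / \<tau>) has_real_derivative y) (at \<tau>) \<and> y \<le> 0" by blast
  qed
  then show ?thesis
    using t assms(2) by (simp add: divide_le_eq field_simps)
qed

lemma G_powr_large:
  assumes "1 \<le> s" and "1 \<le> b"
  shows "G (s powr b / (1 + s powr b)) \<le> b * G (s / (1 + s))"
proof -
  have "G (s powr b / (1 + s powr b)) = H (b * ln s)"
    using assms(1) logistic_ln[of "s powr b"] by (simp add: H_def)
  also have "\<dots> \<le> b * H (ln s)"
    using assms by (intro H_subhomogeneous) auto
  also have "H (ln s) = G (s / (1 + s))"
    using assms(1) by (simp add: H_def logistic_ln)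
  finally show ?thesis .
qed

text \<open>The estimate for \<open>s \<le> 1\<close>, small exponent \<open>p \<le> 1\<close>: with \<open>u = s\<^sup>p \<ge> s\<close> and
  \<open>E(x) = (1-x) F(x)\<close>, we have \<open>G(u/(1+u)) = u E(u/(1+u)) \<le> u E(s/(1+s))\<close>, and
  \<open>E \<le> 1\<close> gives \<open>E \<le> E\<^sup>p\<close>.\<close>

lemma G_powr_small:
  assumes "0 < s" and "s \<le> 1" and "0 < p" and "p \<le> 1"
  shows "G (s powr p / (1 + s powr p)) \<le> G (s / (1 + s)) powr p"
proof -
  define u where "u = s powr p"
  define x where "x = s / (1 + s)"
  define y where "y = u / (1 + u)"
  define E where "E = (1 - x) * F x"
  have u: "0 < u" "s \<le> u"
    using assms powr_mono'[of p 1 s] unfolding u_def by auto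
  have x: "0 < x" "x < 1" "x \<le> y" "y < 1"
    using assms u unfolding x_def y_def by (auto simp: field_simps)
  have E: "0 < E" "E \<le> 1"
    using F_ge_1[of x] x damped_F_antitone[of 0 x] F_ge_1[of 0]
    unfolding E_def by (auto simp: F_def coeff_0)
  have "G y = u * ((1 - y) * F y)"
    using u unfolding G_def y_def by (simp add: field_simps)
  also have "\<dots> \<le> u * E"
    unfolding E_def using u x by (intro mult_left_mono damped_F_antitone) auto
  also have "\<dots> \<le> u * E powr p"
    using u E assms powr_mono'[of p 1 E] by (intro mult_left_mono) auto
  also have "\<dots> = (s * E) powr p"
    unfolding u_def using assms E by (simp add: powr_mult)
  also have "s * E = G x"
    unfolding E_def G_def x_def using assms by (simp add: field_simps)
  finally show ?thesis unfolding y_def u_def x_def .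
qed

end

definition hyp_coeff :: "real \<Rightarrow> real \<Rightarrow> nat \<Rightarrow> real" where
  "hyp_coeff c d n = pochhammer c n * pochhammer d n / (pochhammer (c + d) n * fact n)"

lemma hyp2F1_balanced: "hyp2F1 c d (c + d) x = (\<Sum>n. hyp_coeff c d n * x ^ n)"
  unfolding hyp2F1_def hyp_coeff_def ..

lemma hyp_coeff_Suc:
  assumes "0 < c" and "0 < d"
  shows "hyp_coeff c d (Suc n) = hyp_coeff c d n * ((c + n) * (d + n) / ((c + d + n) * (n + 1)))"
proof -
  have "0 < pochhammer (c + d) n" and "0 < c + d + n"
    using assms by (auto intro!: pochhammer_pos)
  then show ?thesis
    unfolding hyp_coeff_def pochhammer_Suc fact_Suc by (simp add: field_simps)
qed

text \<open>For \<open>cd \<le> 1\<close>: \<open>2cd \<le> 2\<surd>(cd) \<le> c + d\<close>.\<close>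

lemma two_mult_le_add:
  fixes c d :: real
  assumes "0 < c" and "0 < d" and "c * d \<le> 1"
  shows "2 * (c * d) \<le> c + d"
proof -
  have "(c * d)\<^sup>2 \<le> c * d"
    using assms by (simp add: power2_eq_square mult_left_le_one_le)
  then have "c * d \<le> sqrt (c * d)"
    by (rule real_le_rsqrt)
  also have "sqrt (c * d) \<le> (c + d) / 2"
    using assms by (intro arith_geo_mean_sqrt) auto
  finally show ?thesis by simp
qed

text \<open>The hypergeometric coefficients of \<open>F(c,d;c+d;x)\<close> have decreasing weights
  \<open>(n+1) a\<^sub>n\<close> exactly when the ratio of consecutive weights,
  \<open>(n+2)(c+n)(d+n) / ((n+1)\<^sup>2 (c+d+n))\<close>, is at most 1; the numerator deficit is
  \<open>(1 - cd) n + (c + d - 2cd)\<close>, nonnegative since \<open>cd \<le> 1\<close>.\<close>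

lemma hyp_coeff_decreasing_weights:
  assumes "0 < c" and "0 < d" and "c * d \<le> 1"
  shows "decreasing_weights (hyp_coeff c d)"
proof
  show "0 < hyp_coeff c d n" for n
    unfolding hyp_coeff_def using assms by (auto intro!: divide_pos_pos mult_pos_pos pochhammer_pos)
  show "hyp_coeff c d 0 = 1"
    by (simp add: hyp_coeff_def)
  show "decseq (\<lambda>n. real (Suc n) * hyp_coeff c d n)"
  proof (rule decseq_SucI)
    fix n
    have pos: "0 < c + d + n" "0 < hyp_coeff c d n"
      using assms by (auto simp: hyp_coeff_def intro!: divide_pos_pos mult_pos_pos pochhammer_pos)
    have "(n + 2) * ((c + n) * (d + n)) \<le> (n + 1) * ((c + d + n) * (n + 1))"
    proof -
      have "(n + 1) * ((c + d + n) * (n + 1)) - (n + 2) * ((c + n) * (d + n))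
          = (1 - c * d) * n + (c + d - 2 * (c * d))"
        by (simp add: algebra_simps)
      moreover have "0 \<le> (1 - c * d) * n + (c + d - 2 * (c * d))"
        using assms two_mult_le_add[OF assms] by simp
      ultimately show ?thesis by linarith
    qed
    then have "(n + 2) * ((c + n) * (d + n) / ((c + d + n) * (n + 1))) \<le> n + 1"
      using pos by (simp add: divide_le_eq)
    from mult_left_mono[OF this less_imp_le[OF pos(2)]]
    show "real (Suc (Suc n)) * hyp_coeff c d (Suc n) \<le> real (Suc n) * hyp_coeff c d n"
      using hyp_coeff_Suc[OF assms(1,2)] by (simp add: algebra_simps)
  qed
qed

text \<open>The main theorem: \<open>g = G\<close> for the hypergeometric coefficients, and the two
  regimes of \<open>\<phi>\<close> are handled by \<open>G_powr_large\<close> and \<open>G_powr_small\<close>; the factor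
  \<open>b/a \<ge> max(1, b)\<close> absorbs both.\<close>

theorem mainTheorem11:
  fixes a b c d s :: real
  assumes "0 < a" "a \<le> 1" "1 \<le> b"
    and "0 < c" "0 < d" "c * d \<le> 1"
    and "0 < s"
  defines "\<phi> \<equiv> (\<lambda>t::real. max (t powr a) (t powr b))"
    and "g \<equiv> (\<lambda>x::real. x * hyp2F1 c d (c + d) x)"
  shows "g (\<phi> s / (1 + \<phi> s))
           \<le> (b / a) * max ((g (s / (1 + s))) powr a) (g (s / (1 + s)))"
proof -
  interpret decreasing_weights "hyp_coeff c d"
    using assms(4-6) by (rule hyp_coeff_decreasing_weights)
  have g_eq: "g = G"
    by (simp add: fun_eq_iff g_def G_def F_def hyp2F1_balanced)
  let ?M = "max (G (s / (1 + s)) powr a) (G (s / (1 + s)))"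
  have G_s: "0 \<le> G (s / (1 + s))"
    using assms(7) by (intro G_nonneg) auto
  then have M: "0 \<le> ?M" "G (s / (1 + s)) \<le> ?M" "G (s / (1 + s)) powr a \<le> ?M"
    by auto
  have ba: "1 \<le> b / a" "b \<le> b / a"
    using assms(1-3) by (auto simp: field_simps mult_left_le_one_le)
  show ?thesis
  proof (cases "1 \<le> s")
    case True
    then have "\<phi> s = s powr b"
      unfolding \<phi>_def using powr_mono[of a b s] assms(2,3) by simp
    then have "g (\<phi> s / (1 + \<phi> s)) \<le> b * G (s / (1 + s))"
      unfolding g_eq using G_powr_large[OF True assms(3)] by simp
    also have "\<dots> \<le> (b / a) * ?M"
      using ba M G_s assms(3) by (intro mult_mono) auto
    finally show ?thesis unfolding g_eq .
  next
    case False
    then have "\<phi> s = s powr a"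
      unfolding \<phi>_def using powr_mono'[of a b s] assms(2,3,7) by simp
    then have "g (\<phi> s / (1 + \<phi> s)) \<le> ?M"
      unfolding g_eq using G_powr_small[of s a] M(3) False assms(1,2,7) by simp
    also have "\<dots> \<le> (b / a) * ?M"
      using mult_right_mono[OF ba(1) M(1)] by simp
    finally show ?thesis unfolding g_eq .
  qed
qed

end
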